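(* Let $(A,\circ)$ be a Novikov algebra and $\{a,b\}=a\circ b+b\circ a$. Then for all $a,b,c,d\in A$, $$\{\{a,b\},\{c,d\}\}-\{\{a,d\},\{c,b\}\}=\{d\circ c,a\circ b\}+\{c\circ d,b\circ a\}-\{b\circ c,a\circ d\}-\{c\circ b,d\circ a\}.$$
   Context: A (right) Novikov algebra is an algebra $(A,\circ)$ satisfying $a\circ(b\circ c)-(a\circ b)\circ c=a\circ(c\circ b)-(a\circ c)\circ b$ and $a\circ(b\circ c)=b\circ(a\circ c)$ for all $a,b,c$. *)

theory Defs
  imports Main
begin

text \<open>An algebra (A, o): underlying abelian group with a biadditive product.
  (Bilinearity over a base field implies biadditivity; scalar multiplication
  plays no role in the identity.)\<close>
definition biadditive :: "('a::ab_group_add \<Rightarrow> 'a \<Rightarrow> 'a) \<Rightarrow> bool" where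
  "biadditive m \<longleftrightarrow>
     (\<forall>a b c. m (a + b) c = m a c + m b c) \<and> (\<forall>a b c. m a (b + c) = m a b + m a c)"

definition novikov :: "('a::ab_group_add \<Rightarrow> 'a \<Rightarrow> 'a) \<Rightarrow> bool" where
  "novikov m \<longleftrightarrow> biadditive m \<and>
     (\<forall>a b c. m a (m b c) - m (m a b) c = m a (m c b) - m (m a c) b) \<and>
     (\<forall>a b c. m a (m b c) = m b (m a c))"

definition anticomm :: "('a::ab_group_add \<Rightarrow> 'a \<Rightarrow> 'a) \<Rightarrow> 'a \<Rightarrow> 'a \<Rightarrow> 'a" where
  "anticomm m a b = m a b + m b a"

end

theory Submission
  imports Defs "HOL.Modules"
begin

text \<open>Expanding both sides by biadditivity leaves sixteen products of the form
  (x o y) o (z o w). By left commutativity and right symmetry, the difference of two of them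
  with y and w exchanged is z o (x o [y, w]), where [y, w] = y o w - w o y. The two sides of the
  identity differ by four such terms, and these cancel in pairs: left commutativity swaps the two
  outer factors and the commutator changes sign.\<close>

lemma biadditive_additive_right:
  assumes "biadditive m"
  shows "additive (m a)"
  using assms by unfold_locales (simp add: biadditive_def)

lemma novikov_biadditive: "novikov m \<Longrightarrow> biadditive m"
  by (simp add: novikov_def)

lemma novikov_right_symmetric:
  "novikov m \<Longrightarrow> m a (m b c) - m (m a b) c = m a (m c b) - m (m a c) b"
  by (simp add: novikov_def)

lemma novikov_left_commute: "novikov m \<Longrightarrow> m a (m b c) = m b (m a c)"
  by (simp add: novikov_def)

lemma novikov_swap_right_factors:
  assumes N: "novikov m"
  shows "m (m x y) (m z w) - m (m x w) (m z y) = m z (m x (m y w - m w y))"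
proof -
  interpret inner: additive "m x"
    using N by (intro biadditive_additive_right novikov_biadditive)
  interpret outer: additive "m z"
    using N by (intro biadditive_additive_right novikov_biadditive)
  have "m (m x y) (m z w) - m (m x w) (m z y) = m z (m (m x y) w) - m z (m (m x w) y)"
    using novikov_left_commute[OF N] by metis
  also have "\<dots> = m z (m (m x y) w - m (m x w) y)"
    by (simp add: outer.diff)
  also have "m (m x y) w - m (m x w) y = m x (m y w) - m x (m w y)"
    using novikov_right_symmetric[OF N, of x y w] by (simp add: algebra_simps)
  finally show ?thesis
    by (simp add: inner.diff)
qed

lemma novikov_left_commute_skew:
  assumes N: "novikov m"
  shows "m z (m x (m y w - m w y)) + m x (m z (m w y - m y w)) = 0"
proof -
  interpret inner: additive "m x"
    using N by (intro biadditive_additive_right novikov_biadditive)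
  interpret outer: additive "m z"
    using N by (intro biadditive_additive_right novikov_biadditive)
  have "m x (m z (m w y - m y w)) = m x (m z (- (m y w - m w y)))"
    by simp
  also have "\<dots> = - m z (m x (m y w - m w y))"
    by (simp only: inner.minus outer.minus novikov_left_commute[OF N, of x z])
  finally show ?thesis
    by simp
qed

theorem mainTheorem11:
  fixes m :: "'a::ab_group_add \<Rightarrow> 'a \<Rightarrow> 'a"
  assumes "novikov m"
  shows "\<forall>a b c d.
    anticomm m (anticomm m a b) (anticomm m c d) - anticomm m (anticomm m a d) (anticomm m c b)
    = anticomm m (m d c) (m a b) + anticomm m (m c d) (m b a)
      - anticomm m (m b c) (m a d) - anticomm m (m c b) (m d a)"
proof (intro allI)
  fix a b c d
  have biadd: "biadditive m"
    using assms by (rule novikov_biadditive)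
  have cancel_ac: "m c (m a (m b d - m d b)) + m a (m c (m d b - m b d)) = 0"
   and cancel_bd: "m d (m b (m a c - m c a)) + m b (m d (m c a - m a c)) = 0"
    using novikov_left_commute_skew[OF assms] by blast+
  show "anticomm m (anticomm m a b) (anticomm m c d) - anticomm m (anticomm m a d) (anticomm m c b)
    = anticomm m (m d c) (m a b) + anticomm m (m c d) (m b a)
      - anticomm m (m b c) (m a d) - anticomm m (m c b) (m d a)"
    using cancel_ac cancel_bd biadd
    unfolding anticomm_def biadditive_def
      novikov_swap_right_factors[OF assms, symmetric]
    by (simp add: algebra_simps)
qed

end
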